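(* Let $\mathcal{C}$ be the structure described in the context. Then $R(x,y)$ forms an antichain tree modulo $\mathrm{Th}(\mathcal{C})$: there is $\langle c_\eta\rangle_{\eta\in{}^{\omega>}2}$ in a monster model of $\mathrm{Th}(\mathcal{C})$ such that for every $X\subseteq{}^{\omega>}2$, $\{R(x,c_\eta):\eta\in X\}$ is consistent if and only if $X$ is an antichain.
   Context: ${}^{\omega>}2$ is the binary tree of finite $0/1$-sequences with initial-segment order $\trianglelefteq$; ${}^{n>}2$ is the set of sequences of length $<n$. A set $X$ is an antichain if its elements are pairwise $\trianglelefteq$-incomparable; $X\subseteq{}^{n>}2$ is a maximal antichain in ${}^{n>}2$ if it is an antichain not properly contained in any antichain of ${}^{n>}2$ (a maximal antichain in ${}^{n>}2$ is also maximal in ${}^{m>}2$ for $m\ge n$). The language is $\{R\}$ with $R$ binary. $\mathcal{C}$ has universe the disjoint union of $A=\{a_X: X$ a maximal antichain in ${}^{n>}2$ for some $n<\omega\}$ and $B=\{b_\eta:\eta\in{}^{\omega>}2\}$, and $R^{\mathcal{C}}=\{(a_X,b_\eta): \eta\in X\}$. (This is the union of the finite structures $\mathcal{C}_n$ with universe $\{a_X:X$ maximal antichain in ${}^{n>}2\}\cup\{b_\eta:\eta\in{}^{n>}2\}$ and the same relation.) *)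

theory Defs
  imports Main "HOL-Library.Sublist"
begin

text \<open>Finite 0/1-sequences are modelled as bool lists; the initial-segment order is prefix.\<close>

definition antichain :: "bool list set \<Rightarrow> bool" where
  "antichain X \<longleftrightarrow> (\<forall>\<eta>\<in>X. \<forall>\<nu>\<in>X. prefix \<eta> \<nu> \<longrightarrow> \<eta> = \<nu>)"

definition seqs_below :: "nat \<Rightarrow> bool list set" where
  "seqs_below n = {\<eta>. length \<eta> < n}"

definition max_antichain_in :: "nat \<Rightarrow> bool list set \<Rightarrow> bool" where
  "max_antichain_in n X \<longleftrightarrow> X \<subseteq> seqs_below n \<and> antichain X \<and>
     (\<forall>Y. antichain Y \<and> X \<subseteq> Y \<and> Y \<subseteq> seqs_below n \<longrightarrow> Y = X)"

datatype elt = A "bool list set" | B "bool list"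

definition C_univ :: "elt set" where
  "C_univ = {A X | X. \<exists>n. max_antichain_in n X} \<union> {B \<eta> | \<eta>. True}"

fun C_rel :: "elt \<Rightarrow> elt \<Rightarrow> bool" where
  "C_rel (A X) (B \<eta>) = (\<eta> \<in> X)"
| "C_rel _ _ = False"

datatype fm = Rel nat nat | Eq nat nat | Neg fm | Conj fm fm | Ex nat fm

fun fv :: "fm \<Rightarrow> nat set" where
  "fv (Rel i j) = {i, j}"
| "fv (Eq i j) = {i, j}"
| "fv (Neg \<phi>) = fv \<phi>"
| "fv (Conj \<phi> \<psi>) = fv \<phi> \<union> fv \<psi>"
| "fv (Ex x \<phi>) = fv \<phi> - {x}"

fun sat :: "'a set \<Rightarrow> ('a \<Rightarrow> 'a \<Rightarrow> bool) \<Rightarrow> (nat \<Rightarrow> 'a) \<Rightarrow> fm \<Rightarrow> bool" where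
  "sat U R e (Rel i j) = R (e i) (e j)"
| "sat U R e (Eq i j) = (e i = e j)"
| "sat U R e (Neg \<phi>) = (\<not> sat U R e \<phi>)"
| "sat U R e (Conj \<phi> \<psi>) = (sat U R e \<phi> \<and> sat U R e \<psi>)"
| "sat U R e (Ex x \<phi>) = (\<exists>a\<in>U. sat U R (e(x := a)) \<phi>)"

definition sentence :: "fm \<Rightarrow> bool" where
  "sentence \<phi> \<longleftrightarrow> fv \<phi> = {}"

definition is_model :: "'a set \<Rightarrow> ('a \<Rightarrow> 'a \<Rightarrow> bool) \<Rightarrow> fm set \<Rightarrow> bool" where
  "is_model U R T \<longleftrightarrow> U \<noteq> {} \<and> (\<forall>\<phi>\<in>T. \<forall>e. range e \<subseteq> U \<longrightarrow> sat U R e \<phi>)"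

definition Th_C :: "fm set" where
  "Th_C = {\<phi>. sentence \<phi> \<and> (\<forall>e. range e \<subseteq> C_univ \<longrightarrow> sat C_univ C_rel e \<phi>)}"

end

theory Submission
  imports Defs "HOL-Library.Countable_Set"
begin

text \<open>The structure C itself already witnesses the antichain tree property with
  c(\<eta>) = b(\<eta>): two comparable sequences never lie in a common antichain, and every
  finite antichain extends to a maximal antichain Y in some finite level set, whose
  element a(Y) is then R-related to all of it. Since C is countable, it embeds
  into any infinite type, and the isomorphic copy is a model of Th(C).\<close>

lemma finite_seqs_below: "finite (seqs_below n)"
proof -
  have "seqs_below n \<subseteq> {xs :: bool list. set xs \<subseteq> UNIV \<and> length xs \<le> n}"
    by (auto simp: seqs_below_def)
  moreover have "finite {xs :: bool list. set xs \<subseteq> UNIV \<and> length xs \<le> n}"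
    by (rule finite_lists_length_le) simp
  ultimately show ?thesis by (rule finite_subset)
qed

lemma B_in_C_univ [simp]: "B \<eta> \<in> C_univ"
  by (simp add: C_univ_def)

lemma countable_C_univ: "countable C_univ"
proof -
  have "C_univ \<subseteq> A ` Collect finite \<union> range B"
    using finite_seqs_below
    by (auto simp: C_univ_def max_antichain_in_def intro: finite_subset)
  moreover have "countable (A ` Collect finite \<union> range B)"
    using countable_Collect_finite by auto
  ultimately show ?thesis by (rule countable_subset)
qed

lemma finite_antichain_extends_to_max_antichain:
  assumes "finite F" "antichain F"
  obtains n Y where "max_antichain_in n Y" "F \<subseteq> Y"
proof -
  obtain n where n: "F \<subseteq> seqs_below n"
  proof
    show "F \<subseteq> seqs_below (Suc (Max (insert 0 (length ` F))))"
      using assms(1) by (auto simp: seqs_below_def less_Suc_eq_le)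
  qed
  define S where "S = {Y. antichain Y \<and> F \<subseteq> Y \<and> Y \<subseteq> seqs_below n}"
  have "finite S"
    unfolding S_def by (rule finite_subset[of _ "Pow (seqs_below n)"]) (auto simp: finite_seqs_below)
  moreover have "F \<in> S"
    using assms n unfolding S_def by auto
  ultimately obtain Y where Y: "Y \<in> S" and maximal: "\<forall>Z\<in>S. Y \<subseteq> Z \<longrightarrow> Y = Z"
    using finite_has_maximal by blast
  then have "max_antichain_in n Y"
    unfolding max_antichain_in_def S_def by auto
  with Y show thesis
    using that unfolding S_def by blast
qed

lemma C_antichain_tree:
  "(\<forall>F. finite F \<and> F \<subseteq> X \<longrightarrow> (\<exists>a\<in>C_univ. \<forall>\<eta>\<in>F. C_rel a (B \<eta>))) \<longleftrightarrow> antichain X"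
proof
  assume consistent: "\<forall>F. finite F \<and> F \<subseteq> X \<longrightarrow> (\<exists>a\<in>C_univ. \<forall>\<eta>\<in>F. C_rel a (B \<eta>))"
  show "antichain X"
    unfolding antichain_def
  proof (intro ballI impI)
    fix \<eta> \<nu> assume "\<eta> \<in> X" "\<nu> \<in> X" and "prefix \<eta> \<nu>"
    then obtain a where "a \<in> C_univ" "C_rel a (B \<eta>)" "C_rel a (B \<nu>)"
      using consistent[rule_format, of "{\<eta>, \<nu>}"] by auto
    then obtain n Y where "max_antichain_in n Y" "\<eta> \<in> Y" "\<nu> \<in> Y"
      by (cases a) (auto simp: C_univ_def)
    with \<open>prefix \<eta> \<nu>\<close> show "\<eta> = \<nu>"
      by (auto simp: max_antichain_in_def antichain_def)
  qed
next
  assume "antichain X"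
  show "\<forall>F. finite F \<and> F \<subseteq> X \<longrightarrow> (\<exists>a\<in>C_univ. \<forall>\<eta>\<in>F. C_rel a (B \<eta>))"
  proof (intro allI impI)
    fix F assume F: "finite F \<and> F \<subseteq> X"
    with \<open>antichain X\<close> have "antichain F"
      by (auto simp: antichain_def)
    with F obtain n Y where "max_antichain_in n Y" "F \<subseteq> Y"
      using finite_antichain_extends_to_max_antichain by blast
    then show "\<exists>a\<in>C_univ. \<forall>\<eta>\<in>F. C_rel a (B \<eta>)"
      by (intro bexI[of _ "A Y"]) (auto simp: C_univ_def)
  qed
qed

lemma is_model_C_Th_C: "is_model C_univ C_rel Th_C"
proof -
  have "C_univ \<noteq> {}"
    using B_in_C_univ by blast
  then show ?thesis
    by (simp add: is_model_def Th_C_def)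
qed

definition image_rel :: "('a \<Rightarrow> 'b) \<Rightarrow> 'a set \<Rightarrow> ('a \<Rightarrow> 'a \<Rightarrow> bool) \<Rightarrow> 'b \<Rightarrow> 'b \<Rightarrow> bool" where
  "image_rel f U R x y = R (inv_into U f x) (inv_into U f y)"

lemma image_rel_image:
  "inj_on f U \<Longrightarrow> x \<in> U \<Longrightarrow> y \<in> U \<Longrightarrow> image_rel f U R (f x) (f y) = R x y"
  by (simp add: image_rel_def)

lemma sat_image_structure:
  assumes "inj_on f U" "range e \<subseteq> U"
  shows "sat (f ` U) (image_rel f U R) (f \<circ> e) \<phi> = sat U R e \<phi>"
  using assms(2)
proof (induction \<phi> arbitrary: e)
  case (Rel i j)
  then have "e i \<in> U" "e j \<in> U"
    by auto
  then show ?case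
    using assms(1) by (simp add: image_rel_image)
next
  case (Eq i j)
  then have "e i \<in> U" "e j \<in> U"
    by auto
  then show ?case
    using assms(1) by (simp add: inj_on_eq_iff)
next
  case (Ex x \<phi>)
  have "(\<exists>a\<in>f ` U. sat (f ` U) (image_rel f U R) ((f \<circ> e)(x := a)) \<phi>)
      = (\<exists>b\<in>U. sat (f ` U) (image_rel f U R) (f \<circ> e(x := b)) \<phi>)"
    by (simp add: fun_upd_comp)
  also have "\<dots> = (\<exists>b\<in>U. sat U R (e(x := b)) \<phi>)"
    using Ex by (intro bex_cong refl Ex.IH) auto
  finally show ?case
    by (simp only: sat.simps)
qed auto

lemma is_model_image_structure:
  assumes "inj_on f U" "is_model U R T"
  shows "is_model (f ` U) (image_rel f U R) T"
  unfolding is_model_def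
proof (intro conjI ballI allI impI)
  show "f ` U \<noteq> {}"
    using assms(2) by (simp add: is_model_def)
  fix \<phi> and e :: "nat \<Rightarrow> 'b" assume "\<phi> \<in> T" and e: "range e \<subseteq> f ` U"
  let ?e = "inv_into U f \<circ> e"
  have range: "range ?e \<subseteq> U" and lift: "f \<circ> ?e = e"
    using e by (auto simp: fun_eq_iff inv_into_into intro!: f_inv_into_f)
  have "sat U R ?e \<phi>"
    using assms(2) \<open>\<phi> \<in> T\<close> range by (simp add: is_model_def)
  then have "sat (f ` U) (image_rel f U R) (f \<circ> ?e) \<phi>"
    by (simp only: sat_image_structure[OF assms(1) range])
  then show "sat (f ` U) (image_rel f U R) e \<phi>"
    by (simp only: lift)
qed

lemma countable_inj_on_infinite_type:
  assumes "countable S" "infinite (UNIV :: 'b set)"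
  obtains f :: "'a \<Rightarrow> 'b" where "inj_on f S"
proof -
  obtain h :: "nat \<Rightarrow> 'b" where "inj h"
    using infinite_countable_subset[OF assms(2)] by blast
  then have "inj_on (h \<circ> to_nat_on S) S"
    using assms(1) inj_on_to_nat_on by (metis comp_inj_on inj_on_subset subset_UNIV)
  then show thesis by (rule that)
qed

theorem proposition6p2:
  assumes "infinite (UNIV :: 'm set)"
  shows "\<exists>(U :: 'm set) (R :: 'm \<Rightarrow> 'm \<Rightarrow> bool) (c :: bool list \<Rightarrow> 'm).
           is_model U R Th_C \<and> (\<forall>\<eta>. c \<eta> \<in> U) \<and>
           (\<forall>X. (\<forall>F. finite F \<and> F \<subseteq> X \<longrightarrow> (\<exists>a\<in>U. \<forall>\<eta>\<in>F. R a (c \<eta>)))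
                  \<longleftrightarrow> antichain X)"
proof -
  obtain f :: "elt \<Rightarrow> 'm" where f: "inj_on f C_univ"
    using countable_inj_on_infinite_type[OF countable_C_univ assms] by blast
  let ?U = "f ` C_univ" and ?R = "image_rel f C_univ C_rel" and ?c = "\<lambda>\<eta>. f (B \<eta>)"
  have "(\<exists>a\<in>?U. \<forall>\<eta>\<in>F. ?R a (?c \<eta>)) \<longleftrightarrow> (\<exists>a\<in>C_univ. \<forall>\<eta>\<in>F. C_rel a (B \<eta>))" for F
    using f by (auto simp: image_rel_image)
  then have "(\<forall>F. finite F \<and> F \<subseteq> X \<longrightarrow> (\<exists>a\<in>?U. \<forall>\<eta>\<in>F. ?R a (?c \<eta>))) \<longleftrightarrow> antichain X" for X
    using C_antichain_tree by simp
  moreover have "is_model ?U ?R Th_C"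
    using is_model_image_structure[OF f is_model_C_Th_C] .
  ultimately show ?thesis
    by (intro exI[of _ ?U] exI[of _ ?R] exI[of _ ?c]) simp
qed

end
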